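(* Let $(X,T)$ be a Cantor minimal system and let $E(X,T)=\{\theta\in\mathbb R:\exp(2\pi i\theta)\text{ is a continuous eigenvalue of }T\}$. For $\theta\in[0,1)\cap E(X,T)$ let $U_\theta$ be a clopen subset of $X$ such that $1_{U_\theta}-\theta\mathbf 1$ is a real coboundary (such a set exists, with $U_0=\emptyset$). For $\theta\in E(X,T)$ define $\Theta(\theta)=\lfloor\theta\rfloor[1_X]+[1_{U_{\{\theta\}}}]\in K^0(X,T)$, where $\{\theta\}=\theta-\lfloor\theta\rfloor$. Then $\Theta$ is well defined (independent of the choice of the sets $U_{\{\theta\}}$) and $\Theta:E(X,T)\to K^0(X,T)$ is an injective group homomorphism.
   Context: A Cantor minimal system is a homeomorphism $T$ of a Cantor set $X$ with all orbits dense. A continuous eigenvalue is $\lambda\in\mathbb C$ with $f\circ T=\lambda f$ for some continuous $f:X\to\mathbb S^1$. A real coboundary is a function of the form $F-F\circ T$ with $F\in C(X,\mathbb R)$. $K^0(X,T)=C(X,\mathbb Z)/\{f-f\circ T:f\in C(X,\mathbb Z)\}$ and $[f]$ denotes the class of $f$. *)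

theory Defs
  imports "HOL-Analysis.Analysis"
begin

definition cantor_set :: "'a::metric_space set \<Rightarrow> bool" where
  "cantor_set X \<longleftrightarrow> X \<noteq> {} \<and> compact X \<and> (\<forall>x\<in>X. x islimpt X)
     \<and> (\<forall>x\<in>X. connected_component_set X x = {x})"

definition orbit :: "('a \<Rightarrow> 'a) \<Rightarrow> ('a \<Rightarrow> 'a) \<Rightarrow> 'a \<Rightarrow> 'a set" where
  "orbit T S x = {(T ^^ n) x | n. True} \<union> {(S ^^ n) x | n. True}"

definition cantor_minimal_system :: "'a::metric_space set \<Rightarrow> ('a \<Rightarrow> 'a) \<Rightarrow> bool" where
  "cantor_minimal_system X T \<longleftrightarrow> cantor_set X \<and>
     (\<exists>S. homeomorphism X X T S \<and> (\<forall>x\<in>X. closure (orbit T S x) = X))"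

definition cont_eigenvalue :: "'a::metric_space set \<Rightarrow> ('a \<Rightarrow> 'a) \<Rightarrow> complex \<Rightarrow> bool" where
  "cont_eigenvalue X T lam \<longleftrightarrow> (\<exists>f::'a \<Rightarrow> complex. continuous_on X f \<and>
     (\<forall>x\<in>X. norm (f x) = 1) \<and> (\<forall>x\<in>X. f (T x) = lam * f x))"

definition eigen_set :: "'a::metric_space set \<Rightarrow> ('a \<Rightarrow> 'a) \<Rightarrow> real set" where
  "eigen_set X T = {\<theta>. cont_eigenvalue X T (exp (2 * of_real pi * \<i> * of_real \<theta>))}"

definition real_coboundary :: "'a::metric_space set \<Rightarrow> ('a \<Rightarrow> 'a) \<Rightarrow> ('a \<Rightarrow> real) \<Rightarrow> bool" where
  "real_coboundary X T g \<longleftrightarrow> (\<exists>F. continuous_on X F \<and> (\<forall>x\<in>X. g x = F x - F (T x)))"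

text \<open>Integer-valued continuous functions on X (Z carries the discrete topology,
  which is the subspace topology from R).\<close>
definition cont_int :: "'a::metric_space set \<Rightarrow> ('a \<Rightarrow> int) \<Rightarrow> bool" where
  "cont_int X f \<longleftrightarrow> continuous_on X (\<lambda>x. real_of_int (f x))"

text \<open>Equality of classes in K^0(X,T) = C(X,Z) / {h - h \<circ> T}.\<close>
definition K0_eq :: "'a::metric_space set \<Rightarrow> ('a \<Rightarrow> 'a) \<Rightarrow> ('a \<Rightarrow> int) \<Rightarrow> ('a \<Rightarrow> int) \<Rightarrow> bool" where
  "K0_eq X T f g \<longleftrightarrow> (\<exists>h. cont_int X h \<and> (\<forall>x\<in>X. f x - g x = h x - h (T x)))"

definition clopen_in :: "'a::metric_space set \<Rightarrow> 'a set \<Rightarrow> bool" where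
  "clopen_in X U \<longleftrightarrow> openin (top_of_set X) U \<and> closedin (top_of_set X) U"

definition admissible :: "'a::metric_space set \<Rightarrow> ('a \<Rightarrow> 'a) \<Rightarrow> real \<Rightarrow> 'a set \<Rightarrow> bool" where
  "admissible X T \<theta> U \<longleftrightarrow> clopen_in X U \<and>
     real_coboundary X T (\<lambda>x. indicator U x - \<theta>)"

text \<open>Representative of \<Theta>(\<theta>) = floor \<theta> [1_X] + [1_U] with U a choice of U_{frac \<theta>}.\<close>
definition Theta_rep :: "real \<Rightarrow> 'a set \<Rightarrow> 'a \<Rightarrow> int" where
  "Theta_rep \<theta> U = (\<lambda>x. \<lfloor>\<theta>\<rfloor> + indicator U x)"

end

theory Submission
  imports Defs
begin

text \<open>For an eigenvalue exp (2 \<pi> i \<theta>) with eigenfunction f, total disconnectedness lets one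
  write f = exp (2 \<pi> i g) with g continuous and almost in [0, 1); then g \<circ> T - g - \<theta> is
  continuous, integer valued and takes only the values 0 and -1, and the set U where it is -1
  satisfies 1_U - \<theta> = g - g \<circ> T. The key rigidity fact is that on a minimal system an integer
  valued real coboundary is an integer coboundary (exponentiate the transfer function and use
  that invariant continuous functions are constant). Since \<Theta>(\<theta>) - \<theta> is a real coboundary,
  differences of representatives are integer valued real coboundaries, which gives well
  definedness and additivity; and if \<Theta>(\<theta>) = \<Theta>(\<eta>) then the constant \<theta> - \<eta> is a real
  coboundary, which a bounded transfer function forces to vanish.\<close>

section \<open>Clopen sets in compact totally disconnected spaces\<close>

lemma connected_component_of_top_of_set:
  "connected_component_of_set (top_of_set X) x = connected_component_set X x"
  by (auto simp: connected_component_of_def connected_component_def connectedin_subtopology)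

lemma clopen_separating_closed_sets:
  fixes X :: "'a::metric_space set"
  assumes "compact X" and "\<forall>x\<in>X. connected_component_set X x = {x}"
    and "closed A" "closed B" "A \<subseteq> X" "B \<subseteq> X" "A \<inter> B = {}"
  obtains C where "clopen_in X C" "A \<subseteq> C" "C \<inter> B = {}"
proof -
  let ?X = "top_of_set X"
  have "separated_between ?X {x} B" if x: "x \<in> A" for x
  proof (rule separated_between_compact_connected_component)
    show "locally_compact_space ?X"
      using assms(1) by (simp add: compact_imp_locally_compact_space compact_space_subtopology)
    have "connected_component_of_set ?X x \<in> connected_components_of ?X"
      using x assms by (simp add: connected_component_in_connected_components_of subset_iff)
    then show "{x} \<in> connected_components_of ?X"
      using x assms by (simp add: connected_component_of_top_of_set subset_iff)
  qed (use x assms in \<open>auto simp: Hausdorff_space_subtopology closed_subset\<close>)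
  moreover have "compactin ?X A"
    using assms compact_Int_closed[of X A] by (simp add: compactin_subtopology Int_absorb1)
  ultimately have "separated_between ?X A B"
    using assms by (subst separated_between_pointwise_left) auto
  then show ?thesis
    using that unfolding separated_between clopen_in_def by auto
qed

section \<open>Lifting circle-valued functions\<close>

lemma exp_two_pi_i_eq_iff:
  "exp (2 * of_real pi * \<i> * of_real a) = exp (2 * of_real pi * \<i> * of_real b) \<longleftrightarrow>
     (\<exists>n::int. a = b + of_int n)"
proof
  assume "exp (2 * of_real pi * \<i> * of_real a) = exp (2 * of_real pi * \<i> * of_real b)"
  then obtain n :: int
    where "2 * of_real pi * \<i> * of_real a = 2 * of_real pi * \<i> * of_real b + (of_int (2 * n) * pi) * \<i>"
    by (auto simp: exp_eq)
  then have "complex_of_real (2 * pi * a) * \<i> = complex_of_real (2 * pi * (b + of_int n)) * \<i>"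
    by (simp add: algebra_simps)
  then have "2 * pi * a = 2 * pi * (b + of_int n)"
    by (metis complex_i_not_zero mult_cancel_right of_real_eq_iff)
  then show "\<exists>n::int. a = b + of_int n" by auto
next
  assume "\<exists>n::int. a = b + of_int n"
  then obtain n :: int where "a = b + of_int n" by blast
  then show "exp (2 * of_real pi * \<i> * of_real a) = exp (2 * of_real pi * \<i> * of_real b)"
    by (auto simp: exp_eq algebra_simps intro!: exI[of _ n])
qed

lemma abs_Arg_less_if_cos_less_Re:
  assumes "norm z = 1" and "0 \<le> a" "a \<le> pi" and "cos a < Re z"
  shows "\<bar>Arg z\<bar> < a"
proof -
  have "z \<noteq> 0"
    using assms(1) by auto
  then have "cos a < cos \<bar>Arg z\<bar>"
    using assms cos_Arg[of z] by simp
  then show ?thesis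
    using assms Arg_bounded[of z] by (subst (asm) cos_mono_less_eq) auto
qed

lemma continuous_on_Arg2pi_comp:
  assumes "continuous_on D f" and "\<forall>x\<in>D. f x \<notin> \<real>\<^sub>\<ge>\<^sub>0"
  shows "continuous_on D (\<lambda>x. Arg2pi (f x))"
proof -
  have "continuous_on (f ` D) Arg2pi"
    using assms(2) by (auto intro!: continuous_at_imp_continuous_on continuous_at_Arg2pi)
  then show ?thesis
    using assms(1) continuous_on_compose2 by blast
qed

text \<open>Use Arg near the point 1 and Arg2pi away from it, switching between the two along a
  clopen set.\<close>

lemma circle_map_continuous_lift:
  fixes X :: "'a::metric_space set" and f :: "'a \<Rightarrow> complex"
  assumes X: "compact X" "\<forall>x\<in>X. connected_component_set X x = {x}"
    and f: "continuous_on X f" "\<forall>x\<in>X. norm (f x) = 1" and "0 < \<delta>"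
  obtains g where "continuous_on X g" "\<forall>x\<in>X. - \<delta> < g x \<and> g x < 1"
    "\<forall>x\<in>X. f x = exp (2 * of_real pi * \<i> * of_real (g x))"
proof -
  define a where "a = 2 * pi * min \<delta> (1/4)"
  have a: "0 < a" "a \<le> pi / 2" "a / (2 * pi) \<le> \<delta>"
    using \<open>0 < \<delta>\<close> by (auto simp: a_def)
  define c where "c = cos a"
  have c: "0 \<le> c" "c < 1"
    using a cos_monotone_0_pi[of 0 a] cos_ge_zero[of a] by (auto simp: c_def cos_mono_less_eq)
  have cRe: "continuous_on X (\<lambda>x. Re (f x))"
    by (intro continuous_intros f)
  have "closed (X \<inter> (\<lambda>x. Re (f x)) -` {(c + 1) / 2..})" "closed (X \<inter> (\<lambda>x. Re (f x)) -` {..c})"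
    using continuous_closed_preimage[OF cRe compact_imp_closed[OF X(1)]] by auto
  then obtain C where C: "clopen_in X C" "X \<inter> (\<lambda>x. Re (f x)) -` {(c + 1) / 2..} \<subseteq> C"
      "C \<inter> (X \<inter> (\<lambda>x. Re (f x)) -` {..c}) = {}"
    by (rule clopen_separating_closed_sets[OF X]) (use c in auto)
  have CX: "C \<subseteq> X"
    using C(1) by (auto simp: clopen_in_def dest: openin_imp_subset)
  have ReC: "c < Re (f x)" if "x \<in> C" for x
    using C(3) CX that by auto
  have Re_not_C: "f x \<notin> \<real>\<^sub>\<ge>\<^sub>0" if "x \<in> X - C" for x
    using C(2) c f(2) that by (force simp: nonneg_Reals_def)
  define g where "g x = (if x \<in> C then Arg (f x) else Arg2pi (f x)) / (2 * pi)" for x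
  have "continuous_on X g"
  proof -
    have "continuous_on C (\<lambda>x. Arg (f x))"
      using ReC c f(1) CX by (force intro!: continuous_intros intro: continuous_on_subset
          simp: complex_nonpos_Reals_iff)
    moreover have "continuous_on (X - C) (\<lambda>x. Arg2pi (f x))"
      using Re_not_C f(1) by (auto intro!: continuous_on_Arg2pi_comp intro: continuous_on_subset)
    moreover have "closedin (top_of_set X) (X - C)"
      using C(1) by (auto simp: clopen_in_def)
    ultimately have "continuous_on (C \<union> (X - C)) (\<lambda>x. if x \<in> C then Arg (f x) else Arg2pi (f x))"
      using C(1) CX by (intro continuous_on_cases_local) (auto simp: clopen_in_def Un_absorb1)
    then show ?thesis
      unfolding g_def using CX by (auto intro!: continuous_intros simp: Un_absorb1)
  qed
  moreover have "- \<delta> < g x \<and> g x < 1" if "x \<in> X" for x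
  proof (cases "x \<in> C")
    case True
    then have "\<bar>Arg (f x)\<bar> < a"
      using ReC a f(2) CX by (intro abs_Arg_less_if_cos_less_Re) (auto simp: c_def)
    then show ?thesis
      using True a by (auto simp: g_def abs_less_iff field_simps)
  next
    case False
    then show ?thesis
      using Arg2pi[of "f x"] mult_pos_pos[OF pi_gt_zero \<open>0 < \<delta>\<close>] by (simp add: g_def field_simps)
  qed
  moreover have "f x = exp (2 * of_real pi * \<i> * of_real (g x))" if "x \<in> X" for x
  proof -
    have "f x \<noteq> 0"
      using f(2) that by auto
    then show ?thesis
      using Arg_eq[of "f x"] Arg2pi_eq[of "f x"] f(2) that by (simp add: g_def)
  qed
  ultimately show ?thesis
    using that by blast
qed

section \<open>Minimal systems\<close>

lemma funpow_in_invariant_set: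
  assumes "T ` X \<subseteq> X" "x \<in> X" shows "(T ^^ n) x \<in> X"
  using assms by (induction n) auto

lemma invariant_funpow:
  assumes "T ` X \<subseteq> X" "x \<in> X" "\<forall>y\<in>X. \<phi> (T y) = \<phi> y"
  shows "\<phi> ((T ^^ n) x) = \<phi> x"
proof (induction n)
  case (Suc n)
  then show ?case
    using assms funpow_in_invariant_set[OF assms(1,2), of n] by simp
qed simp

lemma minimal_invariant_continuous_const:
  fixes \<phi> :: "'a::metric_space \<Rightarrow> 'b::t1_space"
  assumes hom: "homeomorphism X X T S" and dense: "\<forall>x\<in>X. closure (orbit T S x) = X"
    and "closed X" and "continuous_on X \<phi>" and inv: "\<forall>x\<in>X. \<phi> (T x) = \<phi> x"
    and "x0 \<in> X" "x \<in> X"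
  shows "\<phi> x = \<phi> x0"
proof -
  have TX: "T ` X \<subseteq> X" and SX: "S ` X \<subseteq> X" and TS: "\<forall>y\<in>X. T (S y) = y"
    using hom by (auto simp: homeomorphism_def)
  have Sinv: "\<forall>y\<in>X. \<phi> (S y) = \<phi> y"
    using inv TS SX by (metis image_subset_iff)
  have "\<phi> ((T ^^ n) x0) = \<phi> x0" "\<phi> ((S ^^ n) x0) = \<phi> x0" for n
    using invariant_funpow[OF TX \<open>x0 \<in> X\<close> inv] invariant_funpow[OF SX \<open>x0 \<in> X\<close> Sinv] by auto
  then have "orbit T S x0 \<subseteq> {y \<in> X. \<phi> y = \<phi> x0}"
    unfolding orbit_def
    using funpow_in_invariant_set[OF TX \<open>x0 \<in> X\<close>] funpow_in_invariant_set[OF SX \<open>x0 \<in> X\<close>]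
    by auto
  moreover have "closed {y \<in> X. \<phi> y = \<phi> x0}"
    using assms by (intro continuous_closed_preimage_constant)
  ultimately have "closure (orbit T S x0) \<subseteq> {y \<in> X. \<phi> y = \<phi> x0}"
    by (rule closure_minimal)
  then show ?thesis
    using dense assms by auto
qed

text \<open>If k = F - F \<circ> T is integer valued, then exp (2 \<pi> i F) is invariant, hence constant
  by minimality, so F differs from a constant by a continuous integer valued function.\<close>

lemma integer_coboundary_if_real_coboundary:
  fixes X :: "'a::metric_space set" and k :: "'a \<Rightarrow> int"
  assumes hom: "homeomorphism X X T S" and dense: "\<forall>x\<in>X. closure (orbit T S x) = X"
    and "closed X" "X \<noteq> {}" and "real_coboundary X T (\<lambda>x. of_int (k x))"
  obtains h where "cont_int X h" "\<forall>x\<in>X. k x = h x - h (T x)"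
proof -
  obtain x0 where x0: "x0 \<in> X" using \<open>X \<noteq> {}\<close> by auto
  obtain F :: "'a \<Rightarrow> real" where cF: "continuous_on X F" and k: "\<forall>x\<in>X. of_int (k x) = F x - F (T x)"
    using assms(5) unfolding real_coboundary_def by blast
  have TX: "T ` X \<subseteq> X"
    using hom by (auto simp: homeomorphism_def)
  define \<phi> where "\<phi> x = exp (2 * of_real pi * \<i> * of_real (F x))" for x
  have "\<forall>x\<in>X. \<phi> (T x) = \<phi> x"
  proof
    fix x assume "x \<in> X"
    then have "F (T x) = F x + of_int (- k x)"
      using k by simp
    then show "\<phi> (T x) = \<phi> x"
      unfolding \<phi>_def exp_two_pi_i_eq_iff by blast
  qed
  moreover have "continuous_on X \<phi>"
    unfolding \<phi>_def by (intro continuous_intros cF)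
  ultimately have "\<phi> x = \<phi> x0" if "x \<in> X" for x
    using minimal_invariant_continuous_const[OF hom dense \<open>closed X\<close> _ _ x0 that] by blast
  then have isint: "\<exists>m::int. F x = F x0 + of_int m" if "x \<in> X" for x
    using that unfolding \<phi>_def exp_two_pi_i_eq_iff by blast
  define h where "h x = \<lfloor>F x - F x0\<rfloor>" for x
  have hF: "of_int (h x) = F x - F x0" if "x \<in> X" for x
    using isint[OF that] by (auto simp: h_def)
  have "cont_int X h"
    unfolding cont_int_def
    by (rule continuous_on_eq[of _ "\<lambda>x. F x - F x0"]) (use cF hF in \<open>auto intro: continuous_intros\<close>)
  moreover have "k x = h x - h (T x)" if "x \<in> X" for x
  proof -
    have "real_of_int (k x) = real_of_int (h x - h (T x))"
      using hF k that TX by auto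
    then show ?thesis by linarith
  qed
  ultimately show ?thesis
    using that by blast
qed

section \<open>Real coboundaries\<close>

lemma real_coboundary_add:
  assumes "real_coboundary X T f" "real_coboundary X T g"
  shows "real_coboundary X T (\<lambda>x. f x + g x)"
proof -
  obtain F G where "continuous_on X F" "\<forall>x\<in>X. f x = F x - F (T x)"
    "continuous_on X G" "\<forall>x\<in>X. g x = G x - G (T x)"
    using assms unfolding real_coboundary_def by blast
  then show ?thesis
    unfolding real_coboundary_def by (auto intro!: exI[of _ "\<lambda>x. F x + G x"] continuous_intros)
qed

lemma real_coboundary_diff:
  assumes "real_coboundary X T f" "real_coboundary X T g"
  shows "real_coboundary X T (\<lambda>x. f x - g x)"
proof -
  obtain F G where "continuous_on X F" "\<forall>x\<in>X. f x = F x - F (T x)"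
    "continuous_on X G" "\<forall>x\<in>X. g x = G x - G (T x)"
    using assms unfolding real_coboundary_def by blast
  then show ?thesis
    unfolding real_coboundary_def by (auto intro!: exI[of _ "\<lambda>x. F x - G x"] continuous_intros)
qed

text \<open>Along an orbit a coboundary of the constant c grows like n * c, which a
  bounded transfer function forbids unless c = 0.\<close>

lemma real_coboundary_const_eq_0:
  fixes X :: "'a::metric_space set"
  assumes "compact X" "T ` X \<subseteq> X" "X \<noteq> {}" and "real_coboundary X T (\<lambda>x. c)"
  shows "c = 0"
proof (rule ccontr)
  assume "c \<noteq> 0"
  obtain x0 where x0: "x0 \<in> X" using \<open>X \<noteq> {}\<close> by auto
  obtain F where cF: "continuous_on X F" and c: "\<forall>x\<in>X. c = F x - F (T x)"
    using assms(4) unfolding real_coboundary_def by blast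
  have orbit: "F ((T ^^ n) x0) = F x0 - real n * c" for n
  proof (induction n)
    case (Suc n)
    have "(T ^^ n) x0 \<in> X"
      using assms(2) x0 by (rule funpow_in_invariant_set)
    then have "F (T ((T ^^ n) x0)) = F ((T ^^ n) x0) - c"
      using c by auto
    then show ?case
      using Suc by (simp add: algebra_simps)
  qed simp
  obtain M where M: "\<forall>y\<in>X. \<bar>F y\<bar> \<le> M"
    using compact_imp_bounded[OF compact_continuous_image[OF cF \<open>compact X\<close>]]
    unfolding bounded_iff by auto
  obtain n :: nat where "(2 * M + 1) / \<bar>c\<bar> < real n"
    using reals_Archimedean2 by blast
  then have "2 * M + 1 < real n * \<bar>c\<bar>"
    using \<open>c \<noteq> 0\<close> by (simp add: divide_less_eq)
  moreover have "\<bar>F x0\<bar> \<le> M" "\<bar>F ((T ^^ n) x0)\<bar> \<le> M"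
    using M x0 funpow_in_invariant_set[OF assms(2) x0] by auto
  moreover have "\<bar>F x0 - F ((T ^^ n) x0)\<bar> = real n * \<bar>c\<bar>"
    using orbit[of n] by (simp add: abs_mult)
  ultimately show False
    by linarith
qed

section \<open>Eigenvalues and the map \<Theta>\<close>

lemma cantor_minimal_systemD:
  assumes "cantor_minimal_system X T"
  shows "compact X" "X \<noteq> {}" "\<forall>x\<in>X. connected_component_set X x = {x}"
    and "T ` X \<subseteq> X" "continuous_on X T"
  using assms unfolding cantor_minimal_system_def cantor_set_def homeomorphism_def by auto

lemma zero_mem_eigen_set: "0 \<in> eigen_set X T"
  unfolding eigen_set_def cont_eigenvalue_def by (auto intro!: exI[of _ "\<lambda>x. 1"])

lemma eigen_set_add:
  assumes "\<theta> \<in> eigen_set X T" "\<eta> \<in> eigen_set X T"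
  shows "\<theta> + \<eta> \<in> eigen_set X T"
proof -
  obtain f :: "'a \<Rightarrow> complex" where "continuous_on X f" "\<forall>x\<in>X. norm (f x) = 1"
    "\<forall>x\<in>X. f (T x) = exp (2 * of_real pi * \<i> * of_real \<theta>) * f x"
    using assms(1) unfolding eigen_set_def cont_eigenvalue_def by blast
  moreover obtain g :: "'a \<Rightarrow> complex" where "continuous_on X g" "\<forall>x\<in>X. norm (g x) = 1"
    "\<forall>x\<in>X. g (T x) = exp (2 * of_real pi * \<i> * of_real \<eta>) * g x"
    using assms(2) unfolding eigen_set_def cont_eigenvalue_def by blast
  moreover have "exp (2 * of_real pi * \<i> * of_real (\<theta> + \<eta>)) =
      exp (2 * of_real pi * \<i> * of_real \<theta>) * exp (2 * of_real pi * \<i> * of_real \<eta>)"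
    by (simp add: exp_add[symmetric] algebra_simps)
  ultimately show ?thesis
    unfolding eigen_set_def cont_eigenvalue_def
    by (intro CollectI exI[of _ "\<lambda>x. f x * g x"])
       (auto intro: continuous_intros simp: norm_mult)
qed

lemma eigen_set_uminus:
  assumes "\<theta> \<in> eigen_set X T"
  shows "- \<theta> \<in> eigen_set X T"
proof -
  obtain f :: "'a \<Rightarrow> complex" where "continuous_on X f" "\<forall>x\<in>X. norm (f x) = 1"
    "\<forall>x\<in>X. f (T x) = exp (2 * of_real pi * \<i> * of_real \<theta>) * f x"
    using assms unfolding eigen_set_def cont_eigenvalue_def by blast
  moreover have "exp (2 * of_real pi * \<i> * of_real (- \<theta>)) = cnj (exp (2 * of_real pi * \<i> * of_real \<theta>))"
    by (simp add: exp_cnj)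
  ultimately show ?thesis
    unfolding eigen_set_def cont_eigenvalue_def
    by (intro CollectI exI[of _ "\<lambda>x. cnj (f x)"]) (auto intro: continuous_intros)
qed

lemma admissible_0_empty: "admissible X T 0 {}"
  unfolding admissible_def clopen_in_def real_coboundary_def by (auto intro!: exI[of _ "\<lambda>x. 0"])

lemma admissible_set_of_eigenfunction:
  fixes X :: "'a::metric_space set" and f :: "'a \<Rightarrow> complex"
  assumes X: "compact X" "\<forall>x\<in>X. connected_component_set X x = {x}"
    and T: "T ` X \<subseteq> X" "continuous_on X T"
    and f: "continuous_on X f" "\<forall>x\<in>X. norm (f x) = 1"
      "\<forall>x\<in>X. f (T x) = exp (2 * of_real pi * \<i> * of_real \<theta>) * f x"
    and \<theta>: "0 < \<theta>" "\<theta> < 1"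
  obtains U where "U \<subseteq> X" "admissible X T \<theta> U"
proof -
  obtain g where cg: "continuous_on X g" and g: "\<forall>x\<in>X. - min \<theta> (1 - \<theta>) < g x \<and> g x < 1"
    and fg: "\<forall>x\<in>X. f x = exp (2 * of_real pi * \<i> * of_real (g x))"
    using circle_map_continuous_lift[OF X f(1,2), of "min \<theta> (1 - \<theta>)"] \<theta> by auto
  define h where "h x = g (T x) - g x - \<theta>" for x
  have ch: "continuous_on X h"
    unfolding h_def by (intro continuous_intros continuous_on_compose2[OF cg T(2,1)] cg)
  have h: "h x = 0 \<or> h x = -1" if x: "x \<in> X" for x
  proof -
    have Tx: "T x \<in> X"
      using T(1) x by auto
    have "exp (2 * of_real pi * \<i> * of_real (g (T x))) = f (T x)"
      using fg Tx by auto
    also have "\<dots> = exp (2 * of_real pi * \<i> * of_real \<theta>) * exp (2 * of_real pi * \<i> * of_real (g x))"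
      using fg f(3) x by auto
    also have "\<dots> = exp (2 * of_real pi * \<i> * of_real (g x + \<theta>))"
      by (simp add: exp_add[symmetric] algebra_simps)
    finally have "exp (2 * of_real pi * \<i> * of_real (g (T x))) = exp (2 * of_real pi * \<i> * of_real (g x + \<theta>))" .
    then obtain n :: int where "h x = of_int n"
      unfolding exp_two_pi_i_eq_iff h_def by (auto simp: algebra_simps)
    moreover have "-2 < h x" "h x < 1"
      using g[rule_format, OF x] g[rule_format, OF Tx] by (auto simp: h_def min_def split: if_splits)
    ultimately have "-2 < n" "n < 1"
      by auto
    then show ?thesis
      using \<open>h x = of_int n\<close> by (cases "n = 0") auto
  qed
  define U where "U = X \<inter> h -` {..-1/2}"
  have "openin (top_of_set X) U"
  proof -
    have "U = X \<inter> h -` {..<-1/2}"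
      using h by (force simp: U_def)
    then show ?thesis
      by (auto intro: continuous_openin_preimage_gen[OF ch])
  qed
  moreover have "closedin (top_of_set X) U"
    unfolding U_def by (auto intro: continuous_closedin_preimage[OF ch])
  moreover have "indicator U x - \<theta> = g x - g (T x)" if "x \<in> X" for x
    using h[OF that] that by (auto simp: U_def h_def indicator_def)
  ultimately show ?thesis
    using that cg unfolding admissible_def clopen_in_def real_coboundary_def U_def by blast
qed

lemma admissible_exists:
  assumes "cantor_minimal_system X T" and "\<theta> \<in> eigen_set X T" "0 \<le> \<theta>" "\<theta> < 1"
  shows "\<exists>U\<subseteq>X. admissible X T \<theta> U"
proof (cases "\<theta> = 0")
  case True
  then show ?thesis
    using admissible_0_empty by blast
next
  case False
  obtain f :: "'a \<Rightarrow> complex" where f: "continuous_on X f" "\<forall>x\<in>X. norm (f x) = 1"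
    "\<forall>x\<in>X. f (T x) = exp (2 * of_real pi * \<i> * of_real \<theta>) * f x"
    using assms(2) unfolding eigen_set_def cont_eigenvalue_def by blast
  show ?thesis
    by (rule admissible_set_of_eigenfunction[OF cantor_minimal_systemD(1,3-5)[OF assms(1)] f])
      (use False assms in auto)
qed

lemma real_coboundary_Theta_rep:
  assumes "admissible X T (frac \<theta>) U"
  shows "real_coboundary X T (\<lambda>x. of_int (Theta_rep \<theta> U x) - \<theta>)"
proof -
  have "(\<lambda>x. of_int (Theta_rep \<theta> U x) - \<theta>) = (\<lambda>x. indicator U x - frac \<theta>)"
    by (auto simp: Theta_rep_def frac_def indicator_def)
  then show ?thesis
    using assms by (simp add: admissible_def)
qed

lemma K0_eq_iff_real_coboundary:
  fixes X :: "'a::metric_space set"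
  assumes "cantor_minimal_system X T"
  shows "K0_eq X T f g \<longleftrightarrow> real_coboundary X T (\<lambda>x. of_int (f x - g x))"
proof
  assume "K0_eq X T f g"
  then obtain h where "cont_int X h" "\<forall>x\<in>X. f x - g x = h x - h (T x)"
    unfolding K0_eq_def by blast
  then show "real_coboundary X T (\<lambda>x. of_int (f x - g x))"
    unfolding real_coboundary_def cont_int_def by (intro exI[of _ "\<lambda>x. of_int (h x)"]) auto
next
  assume cob: "real_coboundary X T (\<lambda>x. of_int (f x - g x))"
  obtain S where hom: "homeomorphism X X T S" and dense: "\<forall>x\<in>X. closure (orbit T S x) = X"
    using assms unfolding cantor_minimal_system_def by blast
  obtain h where "cont_int X h" "\<forall>x\<in>X. f x - g x = h x - h (T x)"
    using integer_coboundary_if_real_coboundary[OF hom dense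
        compact_imp_closed[OF cantor_minimal_systemD(1)[OF assms]] cantor_minimal_systemD(2)[OF assms] cob]
    by blast
  then show "K0_eq X T f g"
    unfolding K0_eq_def by blast
qed

lemma Theta_rep_well_defined:
  assumes "cantor_minimal_system X T"
    and "admissible X T (frac \<theta>) U" "admissible X T (frac \<theta>) V"
  shows "K0_eq X T (Theta_rep \<theta> U) (Theta_rep \<theta> V)"
proof -
  have "real_coboundary X T (\<lambda>x. (of_int (Theta_rep \<theta> U x) - \<theta>) - (of_int (Theta_rep \<theta> V x) - \<theta>))"
    using assms by (intro real_coboundary_diff real_coboundary_Theta_rep)
  then show ?thesis
    using assms(1) by (simp add: K0_eq_iff_real_coboundary)
qed

lemma Theta_rep_add:
  assumes "cantor_minimal_system X T" and "admissible X T (frac \<theta>) U"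
    "admissible X T (frac \<eta>) V" "admissible X T (frac (\<theta> + \<eta>)) W"
  shows "K0_eq X T (Theta_rep (\<theta> + \<eta>) W) (\<lambda>x. Theta_rep \<theta> U x + Theta_rep \<eta> V x)"
proof -
  have "real_coboundary X T (\<lambda>x. (of_int (Theta_rep (\<theta> + \<eta>) W x) - (\<theta> + \<eta>))
      - (of_int (Theta_rep \<theta> U x) - \<theta>) - (of_int (Theta_rep \<eta> V x) - \<eta>))"
    using assms by (intro real_coboundary_diff real_coboundary_Theta_rep)
  moreover have "(\<lambda>x. of_int (Theta_rep (\<theta> + \<eta>) W x - (Theta_rep \<theta> U x + Theta_rep \<eta> V x)))
      = (\<lambda>x. (of_int (Theta_rep (\<theta> + \<eta>) W x) - (\<theta> + \<eta>))
      - (of_int (Theta_rep \<theta> U x) - \<theta>) - (of_int (Theta_rep \<eta> V x) - \<eta>))"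
    by (simp add: fun_eq_iff)
  ultimately show ?thesis
    using assms(1) by (simp add: K0_eq_iff_real_coboundary)
qed

lemma Theta_rep_inj:
  assumes "cantor_minimal_system X T" and "admissible X T (frac \<theta>) U"
    "admissible X T (frac \<eta>) V" and "K0_eq X T (Theta_rep \<theta> U) (Theta_rep \<eta> V)"
  shows "\<theta> = \<eta>"
proof -
  have "real_coboundary X T (\<lambda>x. of_int (Theta_rep \<theta> U x - Theta_rep \<eta> V x))"
    using assms(1,4) by (simp add: K0_eq_iff_real_coboundary)
  then have "real_coboundary X T (\<lambda>x. of_int (Theta_rep \<theta> U x - Theta_rep \<eta> V x)
      - (of_int (Theta_rep \<theta> U x) - \<theta>) + (of_int (Theta_rep \<eta> V x) - \<eta>))"
    using assms(2,3) by (intro real_coboundary_add real_coboundary_diff real_coboundary_Theta_rep)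
  moreover have "(\<lambda>x. of_int (Theta_rep \<theta> U x - Theta_rep \<eta> V x)
      - (of_int (Theta_rep \<theta> U x) - \<theta>) + (of_int (Theta_rep \<eta> V x) - \<eta>)) = (\<lambda>x. \<theta> - \<eta>)"
    by (simp add: fun_eq_iff)
  ultimately have "real_coboundary X T (\<lambda>x. \<theta> - \<eta>)"
    by simp
  from real_coboundary_const_eq_0[OF cantor_minimal_systemD(1,4,2)[OF assms(1)] this]
  show ?thesis
    by simp
qed

theorem mainTheorem5:
  fixes X :: "'a::metric_space set" and T :: "'a \<Rightarrow> 'a"
  assumes "cantor_minimal_system X T"
  shows "admissible X T 0 {} \<and>
    (\<forall>\<theta>\<in>eigen_set X T. 0 \<le> \<theta> \<and> \<theta> < 1 \<longrightarrow> (\<exists>U. U \<subseteq> X \<and> admissible X T \<theta> U)) \<and>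
    (\<forall>\<theta>\<in>eigen_set X T. \<forall>U V. U \<subseteq> X \<and> V \<subseteq> X \<and>
           admissible X T (frac \<theta>) U \<and> admissible X T (frac \<theta>) V \<longrightarrow>
           K0_eq X T (Theta_rep \<theta> U) (Theta_rep \<theta> V)) \<and>
    0 \<in> eigen_set X T \<and>
    (\<forall>\<theta>\<in>eigen_set X T. \<forall>\<eta>\<in>eigen_set X T. \<theta> + \<eta> \<in> eigen_set X T \<and> - \<theta> \<in> eigen_set X T) \<and>
    (\<forall>\<theta>\<in>eigen_set X T. \<forall>\<eta>\<in>eigen_set X T. \<forall>U V W.
           U \<subseteq> X \<and> V \<subseteq> X \<and> W \<subseteq> X \<and>
           admissible X T (frac \<theta>) U \<and> admissible X T (frac \<eta>) V \<and>
           admissible X T (frac (\<theta> + \<eta>)) W \<longrightarrow>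
           K0_eq X T (Theta_rep (\<theta> + \<eta>) W) (\<lambda>x. Theta_rep \<theta> U x + Theta_rep \<eta> V x)) \<and>
    (\<forall>\<theta>\<in>eigen_set X T. \<forall>\<eta>\<in>eigen_set X T. \<forall>U V.
           U \<subseteq> X \<and> V \<subseteq> X \<and>
           admissible X T (frac \<theta>) U \<and> admissible X T (frac \<eta>) V \<and>
           K0_eq X T (Theta_rep \<theta> U) (Theta_rep \<eta> V) \<longrightarrow> \<theta> = \<eta>)"
  by (intro conjI ballI allI impI; (elim conjE)?)
    (auto intro: admissible_0_empty zero_mem_eigen_set eigen_set_add eigen_set_uminus
      Theta_rep_well_defined[OF assms] Theta_rep_add[OF assms] Theta_rep_inj[OF assms]
      admissible_exists[OF assms])

end
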